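(* Let $N\ge 2$ and let $T_1,\dots,T_N>0$ be i.i.d. random variables with a continuous distribution, with order statistics $T_{(1)}\le\cdots\le T_{(N)}$, and let $U_{(1)}\le\cdots\le U_{(N)}$ be the order statistics of $N$ independent standard uniform random variables. Let $C(s)$, $s=0,1,2,\dots$, be the income process of the pooled annuity fund described in the context. Let $\beta\in(0,1)$, $k\in\{1,2,\dots,N\}$ and $\varepsilon\in(0,1)$, and suppose \[ \mathbb P\left[(1-\varepsilon)\tfrac{i-1}{N}+\varepsilon\ge U_{(i)}\ge(1+\varepsilon)\tfrac{\min\{i,N-1\}}{N}-\varepsilon\ \text{for all } i\in\{1,2,\dots,k\}\right]\ge\beta. \] Then \[ \mathbb P\left[(1+\varepsilon)C(0)\ge C(s)\ge(1-\varepsilon)C(0)\ \text{for all } s\in\{1,2,\dots,\lfloor T_{(k)}\rfloor\}\right]\ge\beta. \]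
   Context: Pooled annuity fund: $N\ge2$ members, all aged $x\ge0$ at time $0$; member $i$ has future lifetime $T_i$ (from age $x$), the $T_i$ being i.i.d. with a continuous distribution. The number alive at age $x+t$ is $L_{x+t}=\sum_{i=1}^N \mathbf 1_{[T_i>t]}$. The survival probability is ${}_sp_{x+t}=\mathbb P[T_i>t+s\mid T_i>t]$. A constant effective rate of return $R>-1$ per unit time is earned; $\ddot a_{x+t}=1+\sum_{j=1}^\infty(1+R)^{-j}\,{}_jp_{x+t}$. Each member has account value $W(t)\ge0$ with constant $W(0)>0$ and withdraws income $C(t)=W(t)/\ddot a_{x+t}$ at $t=0,1,2,\dots$. The longevity credit at time $t+1$ to each survivor is $M(t+1)=(W(t)-C(t))(1+R)(L_{x+t}-L_{x+t+1})/L_{x+t+1}$ if $L_{x+t+1}>0$, and a surviving member's account becomes $W(t+1)=(W(t)-C(t))(1+R)+M(t+1)$. $\lfloor\cdot\rfloor$ denotes the integer part. *)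

theory Defs
  imports "HOL-Probability.Probability"
begin

definition order_stat :: "nat \<Rightarrow> (nat \<Rightarrow> real) \<Rightarrow> nat \<Rightarrow> real" where
  "order_stat N X i = sort (map X [0..<N]) ! (i - 1)"

text \<open>Survival probability s p_{x+t} = P[T > t+s | T > t] for the (common) lifetime law of X
  under M (with the convention a/0 = 0).\<close>
definition surv :: "'a measure \<Rightarrow> ('a \<Rightarrow> real) \<Rightarrow> nat \<Rightarrow> nat \<Rightarrow> real" where
  "surv M X s t = measure M {\<omega> \<in> space M. X \<omega> > real (t + s)} / measure M {\<omega> \<in> space M. X \<omega> > real t}"

text \<open>Annuity factor a_{x+t} = 1 + sum_{j>=1} (1+R)^(-j) jp_{x+t}.\<close>
definition ann :: "'a measure \<Rightarrow> ('a \<Rightarrow> real) \<Rightarrow> real \<Rightarrow> nat \<Rightarrow> real" where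
  "ann M X R t = 1 + (\<Sum>j. surv M X (Suc j) t / (1 + R) ^ Suc j)"

definition alive :: "nat \<Rightarrow> (nat \<Rightarrow> 'a \<Rightarrow> real) \<Rightarrow> 'a \<Rightarrow> nat \<Rightarrow> nat" where
  "alive N T \<omega> t = card {i \<in> {..<N}. T i \<omega> > real t}"

text \<open>Account value W(t) of a surviving member, given annuity factors a, alive counts L,
  rate R and initial value W0.  (If nobody survives, the longevity credit is set to 0.)\<close>
fun fundW :: "(nat \<Rightarrow> real) \<Rightarrow> (nat \<Rightarrow> nat) \<Rightarrow> real \<Rightarrow> real \<Rightarrow> nat \<Rightarrow> real" where
  "fundW a L R W0 0 = W0"
| "fundW a L R W0 (Suc t) =
     (let w = fundW a L R W0 t; c = w / a t;
          m = (if L (Suc t) > 0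
               then (w - c) * (1 + R) * (real (L t) - real (L (Suc t))) / real (L (Suc t))
               else 0)
      in (w - c) * (1 + R) + m)"

definition fundC :: "(nat \<Rightarrow> real) \<Rightarrow> (nat \<Rightarrow> nat) \<Rightarrow> real \<Rightarrow> real \<Rightarrow> nat \<Rightarrow> real" where
  "fundC a L R W0 t = fundW a L R W0 t / a t"

definition income :: "'a measure \<Rightarrow> nat \<Rightarrow> (nat \<Rightarrow> 'a \<Rightarrow> real) \<Rightarrow> real \<Rightarrow> real \<Rightarrow> 'a \<Rightarrow> nat \<Rightarrow> real" where
  "income M N T R W0 \<omega> t = fundC (ann M (T 0) R) (alive N T \<omega>) R W0 t"

end

theory Submission
  imports Defs
begin

(* The annuity factors obey a(t) = 1 + (S(t+1) / S(t)) a(t+1) / (1 + R), where S(t) = P[T > t].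
   Feeding this into the account recursion, the income telescopes to
     C(s) = C(0) * N S(s) / L(s),
   so it only moves with the ratio of expected to actual survivors.  If J members have died by an
   integer time s < T_(k), then L(s) = N - J and F(T_(J)) <= F(s) < F(T_(J+1)) for the lifetime cdf
   F = 1 - S, and the band on the order statistics of the F(T_i) traps N S(s) / (N - J) in
   [1 - eps, 1 + eps].  By the probability integral transform the F(T_i) are i.i.d. uniform, so the
   band holds with the same probability as for U, at least beta. *)

section \<open>Order statistics\<close>

lemma sorted_nth_le_iff_card:
  fixes ys :: "'a::linorder list"
  assumes "sorted ys" and "1 \<le> i" and "i \<le> length ys"
  shows "ys ! (i - 1) \<le> x \<longleftrightarrow> i \<le> card {l. l < length ys \<and> ys ! l \<le> x}"
    (is "_ \<longleftrightarrow> i \<le> card ?S")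
proof
  assume le_x: "ys ! (i - 1) \<le> x"
  have "l \<in> ?S" if "l < i" for l
  proof -
    have "ys ! l \<le> ys ! (i - 1)"
      using sorted_nth_mono[OF assms(1), of l "i - 1"] that assms(3) by simp
    then show ?thesis using order.trans[OF _ le_x] that assms(3) by simp
  qed
  then have "{..<i} \<subseteq> ?S" by blast
  then show "i \<le> card ?S"
    using card_mono[of ?S "{..<i}"] by simp
next
  assume i_le: "i \<le> card ?S"
  show "ys ! (i - 1) \<le> x"
  proof (rule ccontr)
    assume gt_x: "\<not> ys ! (i - 1) \<le> x"
    have "l < i - 1" if "l \<in> ?S" for l
    proof (rule ccontr)
      assume "\<not> l < i - 1"
      then have "ys ! (i - 1) \<le> ys ! l"
        using sorted_nth_mono[OF assms(1), of "i - 1" l] that by simp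
      then show False using order.trans that gt_x by auto
    qed
    then have "?S \<subseteq> {..<i - 1}" by blast
    then have "card ?S \<le> i - 1"
      using card_mono[of "{..<i - 1}" ?S] by simp
    with i_le assms(2) show False by simp
  qed
qed

lemma order_stat_le_iff:
  assumes "1 \<le> i" and "i \<le> N"
  shows "order_stat N X i \<le> x \<longleftrightarrow> i \<le> card {j \<in> {..<N}. X j \<le> x}"
proof -
  let ?ys = "sort (map X [0..<N])"
  have "card {l. l < length ?ys \<and> ?ys ! l \<le> x} = length (filter (\<lambda>y. y \<le> x) ?ys)"
    by (simp add: length_filter_conv_card)
  also have "\<dots> = length (filter (\<lambda>y. y \<le> x) (map X [0..<N]))"
    by (simp add: filter_sort)
  also have "\<dots> = card {j \<in> {..<N}. X j \<le> x}"
    by (auto simp: length_filter_conv_card intro!: arg_cong[where f = card])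
  finally show ?thesis
    unfolding order_stat_def using sorted_nth_le_iff_card[of ?ys i x] assms by simp
qed

lemma order_stat_in_image:
  assumes "1 \<le> i" and "i \<le> N"
  shows "order_stat N X i \<in> X ` {..<N}"
proof -
  have "order_stat N X i \<in> set (sort (map X [0..<N]))"
    unfolding order_stat_def using assms by (intro nth_mem) auto
  then show ?thesis by auto
qed

lemma order_stat_cong:
  assumes "\<And>j. j < N \<Longrightarrow> X j = Y j"
  shows "order_stat N X i = order_stat N Y i"
proof -
  have "map X [0..<N] = map Y [0..<N]" using assms by (intro map_cong) auto
  then show ?thesis by (simp only: order_stat_def)
qed

lemma order_stat_mono_fun:
  assumes "mono F" and "1 \<le> i" and "i \<le> N"
  shows "order_stat N (\<lambda>j. F (X j)) i = F (order_stat N X i)"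
proof -
  have "sort (map F (map X [0..<N])) = map F (sort (map X [0..<N]))"
    using assms(1) by (intro properties_for_sort)
      (simp_all add: multiset.map_comp sorted_map_mono mono_imp_mono_on)
  then show ?thesis
    unfolding order_stat_def using assms by (simp add: comp_def)
qed

lemma order_stat_bracket:
  assumes "1 \<le> k" and "k \<le> N" and "x < order_stat N X k"
  defines "J \<equiv> card {j \<in> {..<N}. X j \<le> x}"
  shows "J < k" and "x < order_stat N X (Suc J)" and "0 < J \<Longrightarrow> order_stat N X J \<le> x"
proof -
  show "J < k" using order_stat_le_iff[OF assms(1,2), of X x] assms(3) unfolding J_def by linarith
  then show "x < order_stat N X (Suc J)" and "0 < J \<Longrightarrow> order_stat N X J \<le> x"
    using order_stat_le_iff[of "Suc J" N X x] order_stat_le_iff[of J N X x] assms(2)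
    unfolding J_def by auto
qed

lemma nth_ge_length: "length xs \<le> n \<Longrightarrow> xs ! n = [] ! (n - length xs)"
  by (metis append_Nil2 le_add_diff_inverse nth_append_length_plus)

lemma borel_measurable_order_stat:
  assumes "\<And>j. j < N \<Longrightarrow> X j \<in> borel_measurable M"
  shows "(\<lambda>\<omega>. order_stat N (\<lambda>j. X j \<omega>) i) \<in> borel_measurable M"
proof (cases "max 1 i \<le> N")
  case True
  have "order_stat N Y i = order_stat N Y (max 1 i)" for Y
    by (simp add: order_stat_def max_def)
  moreover have "{\<omega> \<in> space M. order_stat N (\<lambda>j. X j \<omega>) (max 1 i) \<le> a} \<in> sets M" for a
  proof -
    note assms[measurable]
    show ?thesis using True by (simp add: order_stat_le_iff) measurable
  qed
  ultimately show ?thesis by (simp add: borel_measurable_iff_le)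
next
  case False
  (* an index outside 1..N yields a junk value that does not depend on the sample *)
  then have "order_stat N Y i = [] ! (i - 1 - N)" for Y
    unfolding order_stat_def by (subst nth_ge_length) auto
  then show ?thesis by simp
qed

definition order_stats_in_band :: "nat \<Rightarrow> nat \<Rightarrow> real \<Rightarrow> (nat \<Rightarrow> real) \<Rightarrow> bool" where
  "order_stats_in_band N k \<epsilon> v \<longleftrightarrow> (\<forall>i\<in>{1..k}.
     (1 - \<epsilon>) * (real i - 1) / real N + \<epsilon> \<ge> order_stat N v i \<and>
     order_stat N v i \<ge> (1 + \<epsilon>) * real (min i (N - 1)) / real N - \<epsilon>)"

lemma order_stats_in_band_survival_bounds:
  fixes F :: "real \<Rightarrow> real" and X :: "nat \<Rightarrow> real"
  assumes "mono F" and "0 \<le> F x" and band: "order_stats_in_band N k \<epsilon> (\<lambda>j. F (X j))"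
    and "1 \<le> k" and "k \<le> N" and "0 < \<epsilon>" and "x < order_stat N X k"
  defines "J \<equiv> card {j \<in> {..<N}. X j \<le> x}"
  shows "J < k"
    and "(1 - \<epsilon>) * (real N - real J) \<le> (1 - F x) * real N"
    and "(1 - F x) * real N \<le> (1 + \<epsilon>) * (real N - real J)"
proof -
  have N: "real N > 0" using assms(4,5) by simp
  note bracket = order_stat_bracket[OF assms(4,5,7), folded J_def]
  show "J < k" by (fact bracket(1))
  have "Suc J \<in> {1..k}"
    using bracket(1) by simp
  have "F x \<le> F (order_stat N X (Suc J))"
    using bracket(2) by (intro monoD[OF \<open>mono F\<close>]) simp
  also have "\<dots> = order_stat N (\<lambda>j. F (X j)) (Suc J)"
    using bracket(1) assms(5) by (intro order_stat_mono_fun[symmetric, OF \<open>mono F\<close>]) auto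
  also have "\<dots> \<le> (1 - \<epsilon>) * (real (Suc J) - 1) / real N + \<epsilon>"
    using band \<open>Suc J \<in> {1..k}\<close> unfolding order_stats_in_band_def by blast
  also have "\<dots> = (1 - \<epsilon>) * real J / real N + \<epsilon>"
    by simp
  finally show "(1 - \<epsilon>) * (real N - real J) \<le> (1 - F x) * real N"
    using N by (simp add: field_simps)
  show "(1 - F x) * real N \<le> (1 + \<epsilon>) * (real N - real J)"
  proof (cases "J = 0")
    case True
    then show ?thesis using N \<open>0 \<le> F x\<close> \<open>0 < \<epsilon>\<close> by (simp add: field_simps)
  next
    case False
    have "J \<in> {1..k}" and "min J (N - 1) = J"
      using bracket(1) False assms(5) by auto
    then have "(1 + \<epsilon>) * real J / real N - \<epsilon> \<le> order_stat N (\<lambda>j. F (X j)) J"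
      using band unfolding order_stats_in_band_def by fastforce
    also have "\<dots> = F (order_stat N X J)"
      using bracket(1) False assms(5) by (intro order_stat_mono_fun[OF \<open>mono F\<close>]) auto
    also have "\<dots> \<le> F x"
      using bracket(3) False by (intro monoD[OF \<open>mono F\<close>]) simp
    finally show ?thesis
      using N by (simp add: field_simps)
  qed
qed

section \<open>The probability integral transform\<close>

lemma cdf_uniform_01: "cdf (uniform_measure lborel {0..1}) u = max 0 (min u 1)"
proof -
  have "cdf (uniform_measure lborel {0..1}) u = measure lborel ({0..1} \<inter> {..u})"
    unfolding cdf_def by (subst measure_uniform_measure) auto
  also have "{0..1} \<inter> {..u} = (if u < 0 then {} else {0..min u 1})"
    by auto
  finally show ?thesis by simp
qed

lemma real_distribution_uniform_01: "real_distribution (uniform_measure lborel {0..1})"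
  unfolding real_distribution_def real_distribution_axioms_def
  by (auto intro!: prob_space_uniform_measure)

lemma (in real_distribution) cdf_sublevel_eq_atMost:
  assumes atomless: "\<And>x. measure M {x} = 0" and "u < 1" and nonempty: "{t. cdf M t \<le> u} \<noteq> {}"
  obtains s where "{t. cdf M t \<le> u} = {..s}" and "cdf M s = u"
proof -
  let ?A = "{t. cdf M t \<le> u}"
  have cont: "isCont (cdf M) x" for x
    using isCont_cdf atomless by simp
  have "eventually (\<lambda>t. u < cdf M t) at_top"
    using cdf_lim_at_top_prob \<open>u < 1\<close> by (rule order_tendstoD)
  then obtain b where "\<And>t. b \<le> t \<Longrightarrow> u < cdf M t"
    by (auto simp: eventually_at_top_linorder)
  then have bdd: "bdd_above ?A"
    by (metis (mono_tags) bdd_aboveI mem_Collect_eq not_le order.strict_iff_not)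
  have "closed ?A"
    using cont by (intro closed_Collect_le continuous_on_const) (simp add: continuous_at_imp_continuous_on)
  with nonempty bdd have "Sup ?A \<in> ?A"
    by (rule closed_contains_Sup)
  define s where "s = Sup ?A"
  have A_eq: "?A = {..s}"
  proof (intro equalityI subsetI)
    fix t assume "t \<in> ?A"
    then show "t \<in> {..s}" using cSup_upper[OF _ bdd] by (simp add: s_def)
  next
    fix t assume "t \<in> {..s}"
    then show "t \<in> ?A" using \<open>Sup ?A \<in> ?A\<close> cdf_nondecreasing[of t s] by (simp add: s_def)
  qed
  have "u \<le> cdf M s"
  proof (rule ccontr)
    assume "\<not> u \<le> cdf M s"
    then have "eventually (\<lambda>t. cdf M t < u) (at s)"
      using cont[of s] unfolding isCont_def by (intro order_tendstoD) auto
    then obtain b where "s < b" and "\<And>t. s < t \<Longrightarrow> t < b \<Longrightarrow> cdf M t < u"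
      by (auto simp: eventually_at_split eventually_at_right_field)
    then have "(s + b) / 2 \<in> ?A" by (simp add: less_imp_le)
    with A_eq \<open>s < b\<close> show False by auto
  qed
  with A_eq \<open>Sup ?A \<in> ?A\<close> show ?thesis
    by (intro that) (auto simp: s_def)
qed

lemma (in real_distribution) measure_cdf_le:
  assumes atomless: "\<And>x. measure M {x} = 0" and "0 \<le> u" and "u < 1"
  shows "measure M {t. cdf M t \<le> u} = u"
proof (cases "{t. cdf M t \<le> u} = {}")
  case True
  have "\<not> 0 < u"
  proof
    assume "0 < u"
    have "eventually (\<lambda>t. cdf M t < u) at_bot"
      using cdf_lim_at_bot \<open>0 < u\<close> by (rule order_tendstoD)
    then obtain t where "cdf M t < u"
      by (metis eventually_at_bot_linorder order_refl)
    with True show False by (auto dest: less_imp_le)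
  qed
  with True \<open>0 \<le> u\<close> show ?thesis by simp
next
  case False
  with atomless \<open>u < 1\<close> obtain s where "{t. cdf M t \<le> u} = {..s}" and "cdf M s = u"
    by (rule cdf_sublevel_eq_atMost)
  then show ?thesis by (simp add: cdf_def2)
qed

lemma (in real_distribution) distr_cdf_uniform:
  assumes atomless: "\<And>x. measure M {x} = 0"
  shows "distr M borel (cdf M) = uniform_measure lborel {0..1}"
proof -
  have meas: "cdf M \<in> borel_measurable M"
    by (simp add: borel_measurable_mono cdf_nondecreasing monoI)
  show ?thesis
  proof (rule cdf_unique[OF real_distribution_distr[OF meas] real_distribution_uniform_01], rule ext)
    fix u
    have "cdf (distr M borel (cdf M)) u = measure M {t. cdf M t \<le> u}"
      using meas by (simp add: cdf_def2 measure_distr vimage_def)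
    also have "\<dots> = max 0 (min u 1)"
    proof -
      consider "u < 0" | "0 \<le> u" "u < 1" | "1 \<le> u" by linarith
      then show ?thesis
      proof cases
        case 1
        then have "{t. cdf M t \<le> u} = {}" using cdf_nonneg by (auto simp: not_le intro: less_le_trans)
        with 1 show ?thesis by simp
      next
        case 2
        then show ?thesis using measure_cdf_le[OF atomless] by simp
      next
        case 3
        then have "{t. cdf M t \<le> u} = space M" using cdf_bounded_prob by (auto intro: order.trans)
        with 3 prob_space show ?thesis by simp
      qed
    qed
    finally show "cdf (distr M borel (cdf M)) u = cdf (uniform_measure lborel {0..1}) u"
      by (simp add: cdf_uniform_01)
  qed
qed

lemma measure_distr_singleton:
  fixes X :: "'a \<Rightarrow> 'b::t1_space"
  assumes "X \<in> borel_measurable M"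
  shows "measure (distr M borel X) {y} = measure M {\<omega> \<in> space M. X \<omega> = y}"
proof -
  have "X -` {y} \<inter> space M = {\<omega> \<in> space M. X \<omega> = y}"
    by blast
  then show ?thesis
    using measure_distr[OF assms, of "{y}"] by simp
qed

lemma (in prob_space) distr_cdf_transform_uniform:
  assumes X: "X \<in> borel_measurable M" and atomless: "\<And>y. measure M {\<omega> \<in> space M. X \<omega> = y} = 0"
  shows "distr M borel (\<lambda>\<omega>. cdf (distr M borel X) (X \<omega>)) = uniform_measure lborel {0..1}"
proof -
  interpret law: real_distribution "distr M borel X"
    using X by simp
  have "measure (distr M borel X) {y} = 0" for y
    using atomless X by (simp add: measure_distr_singleton)
  then have "distr (distr M borel X) borel (cdf (distr M borel X)) = uniform_measure lborel {0..1}"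
    by (rule law.distr_cdf_uniform)
  moreover have "cdf (distr M borel X) \<in> borel_measurable borel"
    by (simp add: borel_measurable_mono law.cdf_nondecreasing monoI)
  ultimately show ?thesis
    by (simp add: distr_distr[OF _ X] comp_def)
qed

section \<open>Independent identically distributed samples\<close>

lemma (in prob_space) measure_iid_vector:
  fixes X :: "'i \<Rightarrow> 'a \<Rightarrow> 'b::topological_space"
  assumes "I \<noteq> {}" and indep: "indep_vars (\<lambda>_. borel) X I"
    and law: "\<And>i. i \<in> I \<Longrightarrow> distr M borel (X i) = \<nu>"
    and A: "A \<in> sets (PiM I (\<lambda>_. borel))"
  shows "measure M {\<omega> \<in> space M. (\<lambda>i\<in>I. X i \<omega>) \<in> A} = measure (PiM I (\<lambda>_. \<nu>)) A"
proof -
  have X_meas: "X i \<in> borel_measurable M" if "i \<in> I" for i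
    using indep that by (auto simp: indep_vars_def)
  then have vec_meas: "(\<lambda>\<omega>. \<lambda>i\<in>I. X i \<omega>) \<in> measurable M (PiM I (\<lambda>_. borel))"
    by (intro measurable_restrict) auto
  have "distr M (PiM I (\<lambda>_. borel)) (\<lambda>\<omega>. \<lambda>i\<in>I. X i \<omega>) = PiM I (\<lambda>i. distr M borel (X i))"
    by (rule indep_vars_iff_distr_eq_PiM'[THEN iffD1, OF \<open>I \<noteq> {}\<close> X_meas indep])
  also have "\<dots> = PiM I (\<lambda>_. \<nu>)"
    using law by (intro PiM_cong) auto
  finally have "measure (PiM I (\<lambda>_. \<nu>)) A = measure M ((\<lambda>\<omega>. \<lambda>i\<in>I. X i \<omega>) -` A \<inter> space M)"
    using measure_distr[OF vec_meas A] by simp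
  also have "(\<lambda>\<omega>. \<lambda>i\<in>I. X i \<omega>) -` A \<inter> space M = {\<omega> \<in> space M. (\<lambda>i\<in>I. X i \<omega>) \<in> A}"
    by blast
  finally show ?thesis ..
qed

lemma (in prob_space) measure_order_stats_in_band_iid:
  assumes "0 < N" and indep: "indep_vars (\<lambda>_. borel) X {..<N}"
    and law: "\<And>i. i < N \<Longrightarrow> distr M borel (X i) = \<nu>"
  shows "measure M {\<omega> \<in> space M. order_stats_in_band N k \<epsilon> (\<lambda>j. X j \<omega>)} =
    measure (PiM {..<N} (\<lambda>_. \<nu>)) {v \<in> space (PiM {..<N} (\<lambda>_. borel)). order_stats_in_band N k \<epsilon> v}"
proof -
  let ?P = "PiM {..<N} (\<lambda>_. borel :: real measure)"
  have "(\<lambda>v. order_stat N v i) \<in> borel_measurable ?P" for i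
    by (rule borel_measurable_order_stat) simp
  note this[measurable]
  have band_sets: "{v \<in> space ?P. order_stats_in_band N k \<epsilon> v} \<in> sets ?P"
    unfolding order_stats_in_band_def by measurable
  have "order_stats_in_band N k \<epsilon> (\<lambda>j\<in>{..<N}. X j \<omega>) = order_stats_in_band N k \<epsilon> (\<lambda>j. X j \<omega>)" for \<omega>
    unfolding order_stats_in_band_def by (simp cong: order_stat_cong)
  moreover have "(\<lambda>j\<in>{..<N}. X j \<omega>) \<in> space ?P" for \<omega>
    by (simp add: space_PiM)
  moreover have "{..<N} \<noteq> {}"
    using \<open>0 < N\<close> by auto
  ultimately show ?thesis
    using measure_iid_vector[OF _ indep law band_sets] by simp
qed

section \<open>The fund recursion\<close>

definition tail_prob :: "'a measure \<Rightarrow> ('a \<Rightarrow> real) \<Rightarrow> nat \<Rightarrow> real" where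
  "tail_prob M X t = measure M {\<omega> \<in> space M. X \<omega> > real t}"

lemma surv_eq_tail_prob: "surv M X s t = tail_prob M X (t + s) / tail_prob M X t"
  by (simp add: surv_def tail_prob_def)

lemma ann_ge_1:
  assumes "R > -1" and "summable (\<lambda>j. surv M X (Suc j) t / (1 + R) ^ Suc j)"
  shows "1 \<le> ann M X R t"
  unfolding ann_def using assms
  by (simp add: suminf_nonneg surv_eq_tail_prob tail_prob_def)

lemma ann_Suc:
  assumes summable: "summable (\<lambda>j. surv M X (Suc j) (Suc t) / (1 + R) ^ Suc j)"
    and nonzero: "tail_prob M X (Suc t) \<noteq> 0"
  shows "ann M X R t = 1 + tail_prob M X (Suc t) / tail_prob M X t / (1 + R) * ann M X R (Suc t)"
proof -
  define q where "q = tail_prob M X (Suc t) / tail_prob M X t / (1 + R)"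
  define g where "g j = surv M X j (Suc t) / (1 + R) ^ j" for j
  have terms: "surv M X (Suc j) t / (1 + R) ^ Suc j = q * g j" for j
    using nonzero by (simp add: q_def g_def surv_eq_tail_prob)
  have "summable g"
    using summable unfolding g_def by (subst summable_Suc_iff[symmetric]) simp
  moreover have "g 0 = 1"
    using nonzero by (simp add: g_def surv_eq_tail_prob)
  ultimately have "suminf g = ann M X R (Suc t)"
    using suminf_split_head[of g] by (simp add: ann_def g_def)
  moreover have "ann M X R t = 1 + q * suminf g"
    unfolding ann_def terms using suminf_mult[OF \<open>summable g\<close>] by simp
  ultimately show ?thesis by (simp add: q_def)
qed

lemma fundC_Suc:
  assumes a_rec: "a t = 1 + p / (1 + R) * a (Suc t)"
    and "a t \<noteq> 0" and "a (Suc t) \<noteq> 0" and "1 + R \<noteq> 0" and "L (Suc t) > 0"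
  shows "fundC a L R W0 (Suc t) = fundC a L R W0 t * p * real (L t) / real (L (Suc t))"
proof -
  define w where "w = fundW a L R W0 t"
  define y where "y = (w - w / a t) * (1 + R)"
  have "fundW a L R W0 (Suc t) = y + y * (real (L t) - real (L (Suc t))) / real (L (Suc t))"
    using \<open>L (Suc t) > 0\<close> by (simp add: Let_def w_def y_def)
  also have "\<dots> = y * real (L t) / real (L (Suc t))"
    using \<open>L (Suc t) > 0\<close> by (simp add: field_simps)
  also have "y = w / a t * p * a (Suc t)"
    using a_rec \<open>a t \<noteq> 0\<close> \<open>1 + R \<noteq> 0\<close> by (simp add: y_def field_simps)
  finally show ?thesis
    using \<open>a (Suc t) \<noteq> 0\<close> by (simp add: fundC_def w_def)
qed

lemma fundC_eq_ratio:
  assumes "\<And>t. t < s \<Longrightarrow> a t = 1 + S (Suc t) / S t / (1 + R) * a (Suc t)"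
    and "\<And>t. a t \<noteq> 0" and "1 + R \<noteq> 0"
    and "\<And>t. t \<le> s \<Longrightarrow> S t \<noteq> 0" and "\<And>t. t \<le> s \<Longrightarrow> L t > 0"
  shows "fundC a L R W0 s = fundC a L R W0 0 * (S s / S 0) * (real (L 0) / real (L s))"
  using assms
proof (induction s)
  case 0
  then show ?case by simp
next
  case (Suc s)
  have "fundC a L R W0 (Suc s) = fundC a L R W0 s * (S (Suc s) / S s) * real (L s) / real (L (Suc s))"
    using Suc.prems(2,3,5) by (intro fundC_Suc Suc.prems(1)) auto
  also have "fundC a L R W0 s = fundC a L R W0 0 * (S s / S 0) * (real (L 0) / real (L s))"
    using Suc by simp
  finally show ?case
    using Suc.prems(4,5)[of s] by (simp add: field_simps)
qed

lemma alive_eq_diff_card: "alive N T \<omega> t = N - card {j \<in> {..<N}. T j \<omega> \<le> real t}"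
proof -
  have "{i \<in> {..<N}. real t < T i \<omega>} = {..<N} - {j \<in> {..<N}. T j \<omega> \<le> real t}"
    by auto
  moreover have "card ({..<N} - {j \<in> {..<N}. T j \<omega> \<le> real t}) =
      N - card {j \<in> {..<N}. T j \<omega> \<le> real t}"
    by (subst card_Diff_subset) auto
  ultimately show ?thesis
    by (simp add: alive_def)
qed

lemma alive_antimono: "t \<le> t' \<Longrightarrow> alive N T \<omega> t' \<le> alive N T \<omega> t"
  unfolding alive_def by (intro card_mono) auto

lemma measurable_alive:
  assumes "\<And>i. i < N \<Longrightarrow> T i \<in> borel_measurable M"
  shows "(\<lambda>\<omega>. alive N T \<omega> t) \<in> measurable M (count_space UNIV)"
proof -
  note assms[measurable]
  show ?thesis unfolding alive_def by measurable
qed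

lemma borel_measurable_fundW:
  assumes "\<And>t. (\<lambda>\<omega>. L \<omega> t) \<in> measurable M (count_space UNIV)"
  shows "(\<lambda>\<omega>. fundW a (L \<omega>) R W0 s) \<in> borel_measurable M"
proof (induction s)
  case (Suc s)
  note Suc.IH[measurable] assms[measurable]
  show ?case unfolding fundW.simps Let_def by measurable
qed simp

section \<open>The pooled annuity fund\<close>

lemma le_nat_floor_iff:
  assumes "1 \<le> s"
  shows "s \<le> nat \<lfloor>x\<rfloor> \<longleftrightarrow> real s \<le> x"
proof
  assume "s \<le> nat \<lfloor>x\<rfloor>"
  with assms have "int s \<le> \<lfloor>x\<rfloor>" by linarith
  then show "real s \<le> x" by (simp add: le_floor_iff)
qed (rule le_nat_floor)

locale pooled_annuity_fund = prob_space M for M :: "'a measure" +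
  fixes N :: nat and T :: "nat \<Rightarrow> 'a \<Rightarrow> real" and R W0 :: real
  assumes N_pos: "0 < N"
    and T_indep: "indep_vars (\<lambda>_. borel) T {..<N}"
    and T_ident: "\<And>i. i < N \<Longrightarrow> distr M borel (T i) = distr M borel (T 0)"
    and T0_atomless: "\<And>y. measure M {\<omega> \<in> space M. T 0 \<omega> = y} = 0"
    and T_pos: "\<And>i \<omega>. i < N \<Longrightarrow> \<omega> \<in> space M \<Longrightarrow> 0 < T i \<omega>"
    and R_gt: "-1 < R" and W0_pos: "0 < W0"
    and ann_summable: "\<And>t. summable (\<lambda>j. surv M (T 0) (Suc j) t / (1 + R) ^ Suc j)"
begin

lemma T_measurable: "i < N \<Longrightarrow> T i \<in> borel_measurable M"
  using T_indep by (auto simp: indep_vars_def)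

definition lifetime_cdf :: "real \<Rightarrow> real" where
  "lifetime_cdf = cdf (distr M borel (T 0))"

lemma T0_measurable: "T 0 \<in> borel_measurable M"
  using T_measurable N_pos by simp

lemma lifetime_cdf_mono: "mono lifetime_cdf"
proof -
  interpret law: real_distribution "distr M borel (T 0)"
    using T0_measurable by simp
  show ?thesis unfolding lifetime_cdf_def by (simp add: monoI law.cdf_nondecreasing)
qed

lemma lifetime_cdf_nonneg: "0 \<le> lifetime_cdf x"
  by (simp add: lifetime_cdf_def cdf_def)

lemma tail_prob_eq_lifetime_cdf: "tail_prob M (T 0) t = 1 - lifetime_cdf (real t)"
proof -
  have "{\<omega> \<in> space M. real t < T 0 \<omega>} = space M - {\<omega> \<in> space M. T 0 \<omega> \<le> real t}"
    by auto
  moreover have "{\<omega> \<in> space M. T 0 \<omega> \<le> real t} \<in> sets M"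
    using T0_measurable by measurable
  moreover have "lifetime_cdf (real t) = prob {\<omega> \<in> space M. T 0 \<omega> \<le> real t}"
    using T0_measurable by (simp add: lifetime_cdf_def cdf_def measure_distr vimage_def Int_def conj_commute)
  ultimately show ?thesis
    by (simp add: tail_prob_def prob_compl)
qed

lemma tail_prob_0: "tail_prob M (T 0) 0 = 1"
proof -
  have "{\<omega> \<in> space M. real 0 < T 0 \<omega>} = space M"
    using T_pos N_pos by auto
  then show ?thesis by (simp add: tail_prob_def prob_space)
qed

lemma T_atomless: "i < N \<Longrightarrow> measure M {\<omega> \<in> space M. T i \<omega> = y} = 0"
proof -
  assume "i < N"
  then have "measure M {\<omega> \<in> space M. T i \<omega> = y} = measure (distr M borel (T 0)) {y}"
    by (simp add: measure_distr_singleton T_measurable T_ident[symmetric])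
  also have "\<dots> = 0"
    by (simp add: measure_distr_singleton T0_measurable T0_atomless)
  finally show ?thesis .
qed

lemma lifetime_cdf_uniform:
  "i < N \<Longrightarrow> distr M borel (\<lambda>\<omega>. lifetime_cdf (T i \<omega>)) = uniform_measure lborel {0..1}"
  unfolding lifetime_cdf_def T_ident[symmetric]
  by (intro distr_cdf_transform_uniform T_measurable T_atomless)

lemma AE_T_not_integer: "AE \<omega> in M. \<forall>i\<in>{..<N}. \<forall>n::nat. T i \<omega> \<noteq> real n"
proof (intro AE_finite_allI AE_all_countable[THEN iffD2] allI)
  fix i n assume "i \<in> {..<N}"
  then have [measurable]: "T i \<in> borel_measurable M"
    by (simp add: T_measurable)
  have "{\<omega> \<in> space M. T i \<omega> = real n} \<in> sets M"
    by measurable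
  with \<open>i \<in> {..<N}\<close> show "AE \<omega> in M. T i \<omega> \<noteq> real n"
    by (subst AE_iff_measurable) (auto simp: emeasure_eq_measure T_atomless)
qed simp

lemma tail_prob_antimono: "t \<le> t' \<Longrightarrow> tail_prob M (T 0) t' \<le> tail_prob M (T 0) t"
  using monoD[OF lifetime_cdf_mono, of "real t" "real t'"] by (simp add: tail_prob_eq_lifetime_cdf)

lemma ann_pos: "0 < ann M (T 0) R t"
  using ann_ge_1[OF R_gt ann_summable, of t] by linarith

lemma income_0_pos: "0 < income M N T R W0 \<omega> 0"
  using ann_pos W0_pos by (simp add: income_def fundC_def)

lemma income_eq_ratio:
  assumes "\<And>t. t \<le> s \<Longrightarrow> tail_prob M (T 0) t \<noteq> 0" and "\<And>t. t \<le> s \<Longrightarrow> 0 < alive N T \<omega> t"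
    and "\<omega> \<in> space M"
  shows "income M N T R W0 \<omega> s =
    income M N T R W0 \<omega> 0 * tail_prob M (T 0) s * real N / real (alive N T \<omega> s)"
proof -
  have "{i \<in> {..<N}. real 0 < T i \<omega>} = {..<N}"
    using T_pos \<open>\<omega> \<in> space M\<close> by auto
  then have "alive N T \<omega> 0 = N"
    by (simp add: alive_def)
  moreover have "fundC (ann M (T 0) R) (alive N T \<omega>) R W0 s =
    fundC (ann M (T 0) R) (alive N T \<omega>) R W0 0 * (tail_prob M (T 0) s / tail_prob M (T 0) 0) *
      (real (alive N T \<omega> 0) / real (alive N T \<omega> s))"
  proof (rule fundC_eq_ratio)
    fix t assume "t < s"
    then have "tail_prob M (T 0) (Suc t) \<noteq> 0"
      using assms(1) by simp
    then show "ann M (T 0) R t =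
        1 + tail_prob M (T 0) (Suc t) / tail_prob M (T 0) t / (1 + R) * ann M (T 0) R (Suc t)"
      by (rule ann_Suc[OF ann_summable])
  qed (use assms(1,2) ann_pos R_gt in \<open>auto simp: less_imp_neq[symmetric]\<close>)
  ultimately show ?thesis
    by (simp add: income_def tail_prob_0)
qed

lemma borel_measurable_income: "(\<lambda>\<omega>. income M N T R W0 \<omega> s) \<in> borel_measurable M"
  unfolding income_def fundC_def
  by (intro borel_measurable_divide borel_measurable_fundW measurable_alive T_measurable) simp_all

lemma survivors_within_band:
  assumes not_integer: "\<forall>i\<in>{..<N}. \<forall>n::nat. T i \<omega> \<noteq> real n"
    and band: "order_stats_in_band N k \<epsilon> (\<lambda>j. lifetime_cdf (T j \<omega>))"
    and "1 \<le> k" and "k \<le> N" and "0 < \<epsilon>"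
    and s: "real s \<le> order_stat N (\<lambda>j. T j \<omega>) k"
  shows "0 < alive N T \<omega> s"
    and "(1 - \<epsilon>) * real (alive N T \<omega> s) \<le> tail_prob M (T 0) s * real N"
    and "tail_prob M (T 0) s * real N \<le> (1 + \<epsilon>) * real (alive N T \<omega> s)"
proof -
  define J where "J = card {j \<in> {..<N}. T j \<omega> \<le> real s}"
  (* without not_integer, s = T_(k) would be possible, with k deaths by time s *)
  have "order_stat N (\<lambda>j. T j \<omega>) k \<noteq> real s"
    using order_stat_in_image[OF \<open>1 \<le> k\<close> \<open>k \<le> N\<close>, of "\<lambda>j. T j \<omega>"] not_integer
    by (metis imageE lessThan_iff)
  with s have "real s < order_stat N (\<lambda>j. T j \<omega>) k"
    by simp
  note bounds = order_stats_in_band_survival_bounds[OF lifetime_cdf_mono lifetime_cdf_nonneg band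
      \<open>1 \<le> k\<close> \<open>k \<le> N\<close> \<open>0 < \<epsilon>\<close> this, folded J_def tail_prob_eq_lifetime_cdf]
  have "J < N"
    using bounds(1) \<open>k \<le> N\<close> by simp
  then have "real (alive N T \<omega> s) = real N - real J"
    unfolding alive_eq_diff_card J_def[symmetric] by simp
  with \<open>J < N\<close> bounds(2,3) show "0 < alive N T \<omega> s"
    and "(1 - \<epsilon>) * real (alive N T \<omega> s) \<le> tail_prob M (T 0) s * real N"
    and "tail_prob M (T 0) s * real N \<le> (1 + \<epsilon>) * real (alive N T \<omega> s)"
    by simp_all
qed

lemma income_bounds_of_band:
  assumes "\<omega> \<in> space M" and "\<forall>i\<in>{..<N}. \<forall>n::nat. T i \<omega> \<noteq> real n"
    and "order_stats_in_band N k \<epsilon> (\<lambda>j. lifetime_cdf (T j \<omega>))"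
    and "1 \<le> k" and "k \<le> N" and "0 < \<epsilon>" and "\<epsilon> < 1"
    and "real s \<le> order_stat N (\<lambda>j. T j \<omega>) k"
  shows "income M N T R W0 \<omega> s \<le> (1 + \<epsilon>) * income M N T R W0 \<omega> 0"
    and "(1 - \<epsilon>) * income M N T R W0 \<omega> 0 \<le> income M N T R W0 \<omega> s"
proof -
  define q where "q = tail_prob M (T 0) s * real N / real (alive N T \<omega> s)"
  note survivors = survivors_within_band[OF assms(2-6,8)]
  have alive_pos: "0 < alive N T \<omega> t" if "t \<le> s" for t
    using survivors(1) alive_antimono[OF that] by (rule less_le_trans)
  have "0 < (1 - \<epsilon>) * real (alive N T \<omega> s)"
    using survivors(1) \<open>\<epsilon> < 1\<close> by simp
  with survivors(2) have "0 < tail_prob M (T 0) s * real N"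
    by linarith
  then have "0 < tail_prob M (T 0) s"
    by (simp add: zero_less_mult_iff)
  then have tail_nonzero: "tail_prob M (T 0) t \<noteq> 0" if "t \<le> s" for t
    using tail_prob_antimono[OF that] by linarith
  have "income M N T R W0 \<omega> s =
      income M N T R W0 \<omega> 0 * tail_prob M (T 0) s * real N / real (alive N T \<omega> s)"
    by (rule income_eq_ratio[OF tail_nonzero alive_pos \<open>\<omega> \<in> space M\<close>])
  then have income_s: "income M N T R W0 \<omega> s = income M N T R W0 \<omega> 0 * q"
    unfolding q_def by (simp only: times_divide_eq_right mult.assoc)
  have alive_s: "0 < real (alive N T \<omega> s)"
    using survivors(1) by simp
  have q_le: "q \<le> 1 + \<epsilon>"
    unfolding q_def pos_divide_le_eq[OF alive_s] by (rule survivors(3))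
  have q_ge: "1 - \<epsilon> \<le> q"
    unfolding q_def pos_le_divide_eq[OF alive_s] by (rule survivors(2))
  have income_0: "0 \<le> income M N T R W0 \<omega> 0"
    using income_0_pos less_imp_le by blast
  show "income M N T R W0 \<omega> s \<le> (1 + \<epsilon>) * income M N T R W0 \<omega> 0"
    using mult_left_mono[OF q_le income_0] unfolding income_s by (metis mult.commute)
  show "(1 - \<epsilon>) * income M N T R W0 \<omega> 0 \<le> income M N T R W0 \<omega> s"
    using mult_left_mono[OF q_ge income_0] unfolding income_s by (metis mult.commute)
qed

lemma measure_band_eq_uniform:
  "prob {\<omega> \<in> space M. order_stats_in_band N k \<epsilon> (\<lambda>j. lifetime_cdf (T j \<omega>))} =
    measure (PiM {..<N} (\<lambda>_. uniform_measure lborel {0..1}))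
      {v \<in> space (PiM {..<N} (\<lambda>_. borel)). order_stats_in_band N k \<epsilon> v}"
proof (rule measure_order_stats_in_band_iid[OF N_pos])
  show "indep_vars (\<lambda>_. borel) (\<lambda>i \<omega>. lifetime_cdf (T i \<omega>)) {..<N}"
    using lifetime_cdf_mono by (intro indep_vars_compose2[OF T_indep] borel_measurable_mono)
qed (rule lifetime_cdf_uniform)

lemma prob_band_le_prob_income_stable:
  assumes "1 \<le> k" and "k \<le> N" and "0 < \<epsilon>" and "\<epsilon> < 1"
  shows "prob {\<omega> \<in> space M. order_stats_in_band N k \<epsilon> (\<lambda>j. lifetime_cdf (T j \<omega>))} \<le>
    prob {\<omega> \<in> space M. \<forall>s\<in>{1..nat \<lfloor>order_stat N (\<lambda>j. T j \<omega>) k\<rfloor>}.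
      (1 + \<epsilon>) * income M N T R W0 \<omega> 0 \<ge> income M N T R W0 \<omega> s \<and>
      income M N T R W0 \<omega> s \<ge> (1 - \<epsilon>) * income M N T R W0 \<omega> 0}"
    (is "prob ?band \<le> prob ?stable")
proof (rule finite_measure_mono_AE)
  show "AE \<omega> in M. \<omega> \<in> ?band \<longrightarrow> \<omega> \<in> ?stable"
    using AE_T_not_integer
  proof eventually_elim
    case (elim \<omega>)
    show ?case
      using income_bounds_of_band[OF _ elim _ assms(1,2,3,4)] le_nat_floor_iff by auto
  qed
  have [measurable]: "i < N \<Longrightarrow> T i \<in> borel_measurable M" for i
    by (rule T_measurable)
  note borel_measurable_order_stat[of N T M, measurable] borel_measurable_income[measurable]
  have "?stable = {\<omega> \<in> space M. \<forall>s::nat. 1 \<le> s \<and> real s \<le> order_stat N (\<lambda>j. T j \<omega>) k \<longrightarrow>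
      (1 + \<epsilon>) * income M N T R W0 \<omega> 0 \<ge> income M N T R W0 \<omega> s \<and>
      income M N T R W0 \<omega> s \<ge> (1 - \<epsilon>) * income M N T R W0 \<omega> 0}"
    using le_nat_floor_iff by auto
  also have "\<dots> \<in> sets M"
    by measurable
  finally show "?stable \<in> sets M" .
qed

end

theorem corollary1:
  fixes M :: "'a measure" and M' :: "'b measure"
    and T :: "nat \<Rightarrow> 'a \<Rightarrow> real" and U :: "nat \<Rightarrow> 'b \<Rightarrow> real"
    and N k :: nat and R W0 \<beta> \<epsilon> :: real
  assumes "prob_space M" and "prob_space M'"
    and "N \<ge> 2"
    and indepT: "prob_space.indep_vars M (\<lambda>_. borel) T {..<N}"
    and identT: "\<forall>i<N. distr M borel (T i) = distr M borel (T 0)"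
    and contT: "\<forall>y. measure M {\<omega> \<in> space M. T 0 \<omega> = y} = 0"
    and posT: "\<forall>i<N. \<forall>\<omega>\<in>space M. T i \<omega> > 0"
    and indepU: "prob_space.indep_vars M' (\<lambda>_. borel) U {..<N}"
    and unifU: "\<forall>i<N. distr M' borel (U i) = uniform_measure lborel {0..1}"
    and "R > -1" and "W0 > 0"
    and summ: "\<forall>t. summable (\<lambda>j. surv M (T 0) (Suc j) t / (1 + R) ^ Suc j)"
    and "0 < \<beta>" and "\<beta> < 1"
    and "1 \<le> k" and "k \<le> N"
    and "0 < \<epsilon>" and "\<epsilon> < 1"
    and hyp: "measure M' {\<omega> \<in> space M'. \<forall>i\<in>{1..k}.
                 (1 - \<epsilon>) * (real i - 1) / real N + \<epsilon> \<ge> order_stat N (\<lambda>j. U j \<omega>) i \<and>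
                 order_stat N (\<lambda>j. U j \<omega>) i \<ge> (1 + \<epsilon>) * real (min i (N - 1)) / real N - \<epsilon>} \<ge> \<beta>"
  shows "measure M {\<omega> \<in> space M. \<forall>s\<in>{1..nat \<lfloor>order_stat N (\<lambda>j. T j \<omega>) k\<rfloor>}.
                 (1 + \<epsilon>) * income M N T R W0 \<omega> 0 \<ge> income M N T R W0 \<omega> s \<and>
                 income M N T R W0 \<omega> s \<ge> (1 - \<epsilon>) * income M N T R W0 \<omega> 0} \<ge> \<beta>"
proof -
  interpret pooled_annuity_fund M N T R W0
  proof (intro pooled_annuity_fund.intro pooled_annuity_fund_axioms.intro)
    show "0 < N" using \<open>N \<ge> 2\<close> by simp
  qed (use assms(1) indepT identT contT posT \<open>R > -1\<close> \<open>W0 > 0\<close> summ in blast)+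
  interpret U: prob_space M' by fact
  have "\<beta> \<le> measure M' {\<omega> \<in> space M'. order_stats_in_band N k \<epsilon> (\<lambda>j. U j \<omega>)}"
    using hyp by (simp add: order_stats_in_band_def)
  also have "\<dots> = measure (PiM {..<N} (\<lambda>_. uniform_measure lborel {0..1}))
      {v \<in> space (PiM {..<N} (\<lambda>_. borel)). order_stats_in_band N k \<epsilon> v}"
    using N_pos unifU by (intro U.measure_order_stats_in_band_iid indepU) auto
  also have "\<dots> = prob {\<omega> \<in> space M. order_stats_in_band N k \<epsilon> (\<lambda>j. lifetime_cdf (T j \<omega>))}"
    by (rule measure_band_eq_uniform[symmetric])
  also have "\<dots> \<le> prob {\<omega> \<in> space M. \<forall>s\<in>{1..nat \<lfloor>order_stat N (\<lambda>j. T j \<omega>) k\<rfloor>}.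
      (1 + \<epsilon>) * income M N T R W0 \<omega> 0 \<ge> income M N T R W0 \<omega> s \<and>
      income M N T R W0 \<omega> s \<ge> (1 - \<epsilon>) * income M N T R W0 \<omega> 0}"
    using \<open>1 \<le> k\<close> \<open>k \<le> N\<close> \<open>0 < \<epsilon>\<close> \<open>\<epsilon> < 1\<close> by (rule prob_band_le_prob_income_stable)
  finally show ?thesis .
qed

end
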